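(* Let $K = \mathbb{Q}(\sqrt{-7})$, $\theta = \frac{1+\sqrt{-7}}{2}$ and $\theta' = 1 - \theta = \frac{1-\sqrt{-7}}{2}$, viewed in the ring of integers $\mathcal{O}_K$. Let $m_1, m_2 \in \mathbb{N}$ be odd with $m_1 \geq 3$, $m_2 \geq 3$ and $m_1 \equiv m_2 \pmod{42}$, and suppose $1 - 2\theta = \theta^{m_1} - \theta'^{m_1}$ and $1 - 2\theta = \theta^{m_2} - \theta'^{m_2}$. Then $m_1 = m_2$.
   Context: $\sqrt{-7}$ is a fixed square root of $-7$ in $K$; $\theta$ is a root of $X^2 - X + 2$ and lies in $\mathcal{O}_K$. *)

theory Defs
  imports Complex_Main "HOL-Number_Theory.Cong"
begin

text \<open>We realise K = Q(sqrt(-7)) inside the complex numbers, fixing the square root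
  sqrt(-7) = i * sqrt 7.  O_K embeds into C, so equations in O_K are equations in C.\<close>

definition sqrt_m7 :: complex where
  "sqrt_m7 = \<i> * complex_of_real (sqrt 7)"

definition theta :: complex where
  "theta = (1 + sqrt_m7) / 2"

definition theta' :: complex where
  "theta' = 1 - theta"

end

theory Submission
  imports Defs
begin

text \<open>Since 2 theta = 1 + sqrt(-7), the equation 1 - 2 theta = theta^m - theta'^m says that
  the sqrt(-7)-coordinate of (1 + sqrt(-7))^m is -2^(m-1); its integer coordinate is always
  congruent to 1 modulo 7. Now (1 + sqrt(-7))^21 = 2^21 + 7 z with z of sqrt(-7)-adic valuation one,
  and the binomial theorem lifts this to (1 + sqrt(-7))^n = 2^n + 7^j z' with z' of valuation one for
  every positive multiple n of 21: a 7th power raises j by one, a power prime to 7 keeps it.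
  If m1 < m2 were two solutions with n = m2 - m1 divisible by 21, comparing sqrt(-7)-coordinates in
  (1 + sqrt(-7))^m2 = (1 + sqrt(-7))^m1 (2^n + 7^j z') would force 7 to divide the integer
  coordinate of (1 + sqrt(-7))^m1.\<close>

lemma square_dvd_binomial_remainder:
  fixes c y :: "'a :: comm_ring_1"
  shows "y\<^sup>2 dvd (c + y) ^ k - c ^ k - of_nat k * c ^ (k - 1) * y"
proof (induction k)
  case 0 show ?case by simp
next
  case (Suc k)
  then obtain r where r: "(c + y) ^ k = c ^ k + of_nat k * c ^ (k - 1) * y + y\<^sup>2 * r"
    by (auto simp: dvd_def algebra_simps)
  have "c * (of_nat k * c ^ (k - 1)) = of_nat k * c ^ k"
    by (cases k) simp_all
  then have "(c + y) ^ Suc k - c ^ Suc k - of_nat (Suc k) * c ^ k * y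
      = y\<^sup>2 * (of_nat k * c ^ (k - 1) + (c + y) * r)"
    by (simp add: r algebra_simps power2_eq_square)
  then show ?case by simp
qed

lemma binomial_lifting:
  fixes c z p :: "'a :: comm_ring_1"
  assumes "p dvd z\<^sup>2" and "j \<ge> 1"
  shows "\<exists>w. (c + p ^ j * z) ^ k = c ^ k + p ^ j * (of_nat k * c ^ (k - 1) * z + p\<^sup>2 * w)"
proof -
  obtain v where v: "z\<^sup>2 = p * v"
    using assms(1) by blast
  have "p ^ j * (p\<^sup>2 * p ^ (j - 1)) = p * (p ^ j)\<^sup>2"
    using assms(2) by (cases j) (simp_all add: power2_eq_square algebra_simps)
  then have "(p ^ j * z)\<^sup>2 = p ^ j * (p\<^sup>2 * (p ^ (j - 1) * v))"
    by (simp add: v power_mult_distrib algebra_simps)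
  moreover obtain r where
    "(c + p ^ j * z) ^ k = c ^ k + of_nat k * c ^ (k - 1) * (p ^ j * z) + (p ^ j * z)\<^sup>2 * r"
    using square_dvd_binomial_remainder[of "p ^ j * z" c k] by (auto simp: dvd_def algebra_simps)
  ultimately have "(c + p ^ j * z) ^ k
      = c ^ k + p ^ j * (of_nat k * c ^ (k - 1) * z + p\<^sup>2 * (p ^ (j - 1) * v * r))"
    by (simp add: algebra_simps)
  then show ?thesis ..
qed

text \<open>We compute in Z[sqrt(-7)] rather than in O_K: it contains 2 theta, and its elements have
  integer coordinates.\<close>

datatype zsqrtm7 = ZS (zre: int) (zim: int)

instantiation zsqrtm7 :: comm_ring_1
begin

definition "0 = ZS 0 0"
definition "1 = ZS 1 0"
definition "x + y = ZS (zre x + zre y) (zim x + zim y)"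
definition "- x = ZS (- zre x) (- zim x)"
definition "x - y = ZS (zre x - zre y) (zim x - zim y)"
definition "x * y = ZS (zre x * zre y - 7 * zim x * zim y) (zre x * zim y + zim x * zre y)"

instance
  by standard
    (auto simp: zsqrtm7.expand zero_zsqrtm7_def one_zsqrtm7_def plus_zsqrtm7_def
      uminus_zsqrtm7_def minus_zsqrtm7_def times_zsqrtm7_def algebra_simps)

end

lemma zre_zim_simps [simp]:
  "zre 0 = 0" "zim 0 = 0" "zre 1 = 1" "zim 1 = 0"
  "zre (x + y) = zre x + zre y" "zim (x + y) = zim x + zim y"
  "zre (x - y) = zre x - zre y" "zim (x - y) = zim x - zim y"
  "zre (- x) = - zre x" "zim (- x) = - zim x"
  "zre (x * y) = zre x * zre y - 7 * zim x * zim y"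
  "zim (x * y) = zre x * zim y + zim x * zre y"
  by (simp_all add: zero_zsqrtm7_def one_zsqrtm7_def plus_zsqrtm7_def
      uminus_zsqrtm7_def minus_zsqrtm7_def times_zsqrtm7_def)

lemma ZS_times_ZS: "ZS a b * ZS c d = ZS (a * c - 7 * b * d) (a * d + b * c)"
  by (simp add: times_zsqrtm7_def)

lemma of_int_zsqrtm7: "of_int k = ZS k 0"
proof -
  have "of_nat n = ZS (int n) 0" for n
    by (induction n) (simp_all add: zsqrtm7.expand)
  then show ?thesis
    by (cases k rule: int_cases) (simp_all add: zsqrtm7.expand)
qed

lemma zre_of_int [simp]: "zre (of_int k) = k" and zim_of_int [simp]: "zim (of_int k) = 0"
  by (simp_all add: of_int_zsqrtm7)

lemma zre_numeral [simp]: "zre (numeral n) = numeral n" and zim_numeral [simp]: "zim (numeral n) = 0"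
  using zre_of_int[of "numeral n"] zim_of_int[of "numeral n"] by simp_all

lemma zre_numeral_power [simp]: "zre (numeral a ^ n) = numeral a ^ n"
  and zim_numeral_power [simp]: "zim (numeral a ^ n) = 0"
  using zre_of_int[of "numeral a ^ n"] zim_of_int[of "numeral a ^ n"] by simp_all

lemma of_int_dvd_zsqrtm7_iff: "of_int m dvd w \<longleftrightarrow> m dvd zre w \<and> m dvd zim w"
proof
  assume "of_int m dvd w"
  then obtain v where "w = of_int m * v" by blast
  then show "m dvd zre w \<and> m dvd zim w" by simp
next
  assume "m dvd zre w \<and> m dvd zim w"
  then have "w = of_int m * ZS (zre w div m) (zim w div m)"
    by (simp add: zsqrtm7.expand)
  then show "of_int m dvd w" by (rule dvdI)
qed

lemma sqrt_m7_squared: "sqrt_m7\<^sup>2 = -7"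
  by (simp add: sqrt_m7_def power_mult_distrib flip: of_real_power)

lemma cnj_sqrt_m7 [simp]: "cnj sqrt_m7 = - sqrt_m7"
  by (simp add: sqrt_m7_def)

definition to_complex :: "zsqrtm7 \<Rightarrow> complex" where
  "to_complex w = of_int (zre w) + of_int (zim w) * sqrt_m7"

lemma to_complex_power: "to_complex (w ^ n) = to_complex w ^ n"
proof -
  have "to_complex x * to_complex y = of_int (zre x * zre y) + of_int (zim x * zim y) * sqrt_m7\<^sup>2
      + of_int (zre x * zim y + zim x * zre y) * sqrt_m7" for x y
    by (simp add: to_complex_def algebra_simps power2_eq_square)
  then have "to_complex (x * y) = to_complex x * to_complex y" for x y
    by (simp add: to_complex_def sqrt_m7_squared)
  then show ?thesis
    by (induction n) (simp_all add: to_complex_def)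
qed

definition two_theta :: zsqrtm7 where
  "two_theta = ZS 1 1"

lemma to_complex_two_theta: "to_complex two_theta = 2 * theta"
  by (simp add: to_complex_def two_theta_def theta_def)

lemma theta_power_diff:
  "2 ^ m * (theta ^ m - theta' ^ m) = 2 * of_int (zim (two_theta ^ m)) * sqrt_m7"
proof -
  have "2 ^ m * theta ^ m = to_complex (two_theta ^ m)"
    by (simp add: to_complex_power to_complex_two_theta power_mult_distrib)
  moreover have "2 * theta' = cnj (to_complex two_theta)"
    by (simp add: to_complex_def two_theta_def theta'_def theta_def field_simps)
  then have "2 ^ m * theta' ^ m = cnj (to_complex (two_theta ^ m))"
    by (simp add: to_complex_power flip: power_mult_distrib)
  ultimately show ?thesis
    by (simp add: right_diff_distrib to_complex_def)
qed

lemma zim_two_theta_power: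
  assumes "1 - 2 * theta = theta ^ m - theta' ^ m"
  shows "2 * zim (two_theta ^ m) = - (2 ^ m)"
proof -
  have "1 - 2 * theta = - sqrt_m7"
    by (simp add: theta_def field_simps)
  then have "of_int (2 * zim (two_theta ^ m)) * sqrt_m7 = of_int (- (2 ^ m)) * sqrt_m7"
    using assms theta_power_diff[of m] by simp
  moreover have "sqrt_m7 \<noteq> 0"
    by (simp add: sqrt_m7_def)
  ultimately show ?thesis
    by (simp only: mult_cancel_right of_int_eq_iff) simp
qed

lemma zre_two_theta_power_cong: "[zre (two_theta ^ m) = 1] (mod 7)"
proof (induction m)
  case 0 show ?case by simp
next
  case (Suc m)
  have "[zre (two_theta ^ m) - 7 * zim (two_theta ^ m) = zre (two_theta ^ m)] (mod 7)"
    by (simp add: cong_iff_dvd_diff)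
  with Suc show ?case
    by (simp add: two_theta_def mult.commute[of _ two_theta] cong_trans)
qed

lemma seven_not_dvd_two_power: "\<not> (7::int) dvd 2 ^ m"
  using prime_dvd_power[of "7::int" 2 m] by auto

text \<open>a + b sqrt(-7) with 7 dividing a but not b is exactly sqrt(-7) times an element prime
  to sqrt(-7).\<close>

definition sqrt_m7_multiplicity_one :: "zsqrtm7 \<Rightarrow> bool" where
  "sqrt_m7_multiplicity_one z \<longleftrightarrow> 7 dvd zre z \<and> \<not> 7 dvd zim z"

lemma sqrt_m7_multiplicity_one_square_dvd:
  assumes "sqrt_m7_multiplicity_one z"
  shows "7 dvd z\<^sup>2"
  using assms of_int_dvd_zsqrtm7_iff[of 7 "z\<^sup>2"]
  by (auto simp: sqrt_m7_multiplicity_one_def power2_eq_square)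

lemma sqrt_m7_multiplicity_one_linear:
  assumes "sqrt_m7_multiplicity_one z" and "\<not> 7 dvd a"
  shows "sqrt_m7_multiplicity_one (of_int a * z + 7 * w)"
proof -
  have "\<not> 7 dvd a * zim z"
    using assms by (simp add: sqrt_m7_multiplicity_one_def prime_dvd_mult_iff)
  then show ?thesis
    using assms(1) by (simp add: sqrt_m7_multiplicity_one_def dvd_add_left_iff)
qed

lemma two_theta_power_21:
  "two_theta ^ 21 = 2 ^ 21 + 7 * ZS (7 * 59768832) 42991616"
proof -
  have "two_theta ^ 21 = ZS 2930769920 300941312"
    by (simp add: two_theta_def eval_nat_numeral ZS_times_ZS del: zre_zim_simps)
  then show ?thesis
    by (simp add: zsqrtm7.expand)
qed

lemma two_theta_power_seven_mult:
  assumes j: "j \<ge> 1" and z: "sqrt_m7_multiplicity_one z"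
    and n: "two_theta ^ n = 2 ^ n + 7 ^ j * z"
  shows "\<exists>z'. sqrt_m7_multiplicity_one z' \<and> two_theta ^ (7 * n) = 2 ^ (7 * n) + 7 ^ (j + 1) * z'"
proof -
  obtain w where w: "(2 ^ n + 7 ^ j * z) ^ 7 = (2 ^ n) ^ 7 + 7 ^ j * (7 * (2 ^ n) ^ 6 * z + 7\<^sup>2 * w)"
    using binomial_lifting[OF sqrt_m7_multiplicity_one_square_dvd[OF z] j, where c = "2 ^ n" and k = 7]
    by auto
  have "two_theta ^ (7 * n) = (2 ^ n + 7 ^ j * z) ^ 7"
    unfolding n[symmetric] by (metis mult.commute power_mult)
  also have "\<dots> = 2 ^ (7 * n) + 7 ^ (j + 1) * (of_int (2 ^ (6 * n)) * z + 7 * w)"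
    unfolding w by (simp add: algebra_simps power2_eq_square flip: power_mult)
  finally show ?thesis
    using sqrt_m7_multiplicity_one_linear[OF z seven_not_dvd_two_power] by blast
qed

lemma two_theta_power_21_coprime_mult:
  assumes "\<not> 7 dvd k"
  shows "\<exists>z. sqrt_m7_multiplicity_one z \<and> two_theta ^ (21 * k) = 2 ^ (21 * k) + 7 * z"
proof -
  define z where "z = ZS (7 * 59768832) 42991616"
  have z: "sqrt_m7_multiplicity_one z"
    by (simp add: z_def sqrt_m7_multiplicity_one_def)
  obtain w where "(2 ^ 21 + 7 ^ 1 * z) ^ k
      = (2 ^ 21) ^ k + 7 ^ 1 * (of_nat k * (2 ^ 21) ^ (k - 1) * z + 7\<^sup>2 * w)"
    using binomial_lifting[OF sqrt_m7_multiplicity_one_square_dvd[OF z], where c = "2 ^ 21" and j = 1]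
    by auto
  then have "two_theta ^ (21 * k) = 2 ^ (21 * k) + 7 * (of_int (int k * 2 ^ (21 * (k - 1))) * z + 7 * (7 * w))"
    by (simp add: two_theta_power_21 power_mult z_def)
  moreover have "\<not> (7::int) dvd int k"
    using assms by presburger
  then have "\<not> 7 dvd int k * 2 ^ (21 * (k - 1))"
    using seven_not_dvd_two_power by (simp add: prime_dvd_mult_iff)
  ultimately show ?thesis
    using sqrt_m7_multiplicity_one_linear[OF z] by blast
qed

lemma two_theta_power_21_multiple:
  assumes "k \<ge> 1"
  shows "\<exists>j z. j \<ge> 1 \<and> sqrt_m7_multiplicity_one z \<and> two_theta ^ (21 * k) = 2 ^ (21 * k) + 7 ^ j * z"
  using assms
proof (induction k rule: less_induct)
  case (less k)
  show ?case
  proof (cases "7 dvd k")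
    case True
    then obtain l where k: "k = 7 * l" ..
    with less.prems have "1 \<le> l" "l < k" by auto
    then obtain j z where "j \<ge> 1" "sqrt_m7_multiplicity_one z"
      "two_theta ^ (21 * l) = 2 ^ (21 * l) + 7 ^ j * z"
      using less.IH by blast
    then obtain z' where "sqrt_m7_multiplicity_one z'"
      "two_theta ^ (21 * k) = 2 ^ (21 * k) + 7 ^ (j + 1) * z'"
      using two_theta_power_seven_mult[of j z "21 * l"] by (auto simp: k mult.left_commute)
    then show ?thesis
      by (intro exI[of _ "j + 1"] exI[of _ z']) simp
  next
    case False
    then show ?thesis
      using two_theta_power_21_coprime_mult by (metis order_refl power_one_right)
  qed
qed

lemma zim_two_theta_power_21_dvd_diff_imp_eq:
  assumes h1: "2 * zim (two_theta ^ m1) = - (2 ^ m1)"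
    and h2: "2 * zim (two_theta ^ m2) = - (2 ^ m2)"
    and le: "m1 \<le> m2" and "21 dvd m2 - m1"
  shows "m1 = m2"
proof (rule ccontr)
  assume "m1 \<noteq> m2"
  define n where "n = m2 - m1"
  obtain k where "n = 21 * k"
    using assms(4) n_def by blast
  with \<open>m1 \<noteq> m2\<close> le obtain j z where z: "sqrt_m7_multiplicity_one z"
    and n: "two_theta ^ n = 2 ^ n + 7 ^ j * z"
    using two_theta_power_21_multiple[of k] n_def by fastforce
  have "two_theta ^ m2 = two_theta ^ m1 * two_theta ^ n"
    using le by (simp add: n_def flip: power_add)
  then have "zim (two_theta ^ m2) = 2 ^ n * zim (two_theta ^ m1) + 7 ^ j * zim (two_theta ^ m1 * z)"
    by (simp add: n algebra_simps)
  moreover have "(2::int) ^ m2 = 2 ^ n * 2 ^ m1"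
    using le by (simp add: n_def flip: power_add)
  then have "zim (two_theta ^ m2) = 2 ^ n * zim (two_theta ^ m1)"
    using h1 h2 by (metis minus_mult_right mult.left_commute mult_cancel_left zero_neq_numeral)
  ultimately have "zim (two_theta ^ m1 * z) = 0"
    by simp
  then have "zre (two_theta ^ m1) * zim z = - zim (two_theta ^ m1) * zre z"
    by simp
  then have "7 dvd zre (two_theta ^ m1) * zim z"
    using z by (simp add: sqrt_m7_multiplicity_one_def)
  then have "7 dvd zre (two_theta ^ m1)"
    using z by (simp add: sqrt_m7_multiplicity_one_def prime_dvd_mult_iff)
  then show False
    using cong_dvd_iff[OF zre_two_theta_power_cong[of m1]] by simp
qed

theorem mainTheorem4:
  fixes m1 m2 :: nat
  assumes "odd m1" and "odd m2" and "m1 \<ge> 3" and "m2 \<ge> 3"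
    and "[m1 = m2] (mod 42)"
    and "1 - 2 * theta = theta ^ m1 - theta' ^ m1"
    and "1 - 2 * theta = theta ^ m2 - theta' ^ m2"
  shows "m1 = m2"
proof -
  have h1: "2 * zim (two_theta ^ m1) = - (2 ^ m1)" and h2: "2 * zim (two_theta ^ m2) = - (2 ^ m2)"
    using assms(6,7) by (simp_all add: zim_two_theta_power)
  have "[m1 = m2] (mod 21)"
    using assms(5) by (rule cong_dvd_modulus_nat) simp
  then consider "m1 \<le> m2" "21 dvd m2 - m1" | "m2 \<le> m1" "21 dvd m1 - m2"
    by (metis cong_altdef_nat cong_sym nat_le_linear)
  then show ?thesis
    using zim_two_theta_power_21_dvd_diff_imp_eq h1 h2 by cases metis+
qed

end
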